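(* Fix $n\in\mathbb N$ and let $H_0$ be a finite weakly $n$-saturated graph with vertex set $V(H_0)=\{1,2,\dots,k\}$ for some $k\ge n$. For $m\in\mathbb N$ let $H_m$ be the random graph with vertex set $\{1,\dots,k\}\times\{0,1,\dots,m\}$ whose edge relation is determined as follows: (i) for all $i<j\le k$, $(i,0)$ and $(j,0)$ are adjacent in $H_m$ if and only if $i$ and $j$ are adjacent in $H_0$; (ii) for all $i,j\le k$, if $i$ and $j$ are not adjacent in $H_0$, then $(i,s)$ and $(j,t)$ are not adjacent for any $s,t\le m$; (iii) if $i$ and $j$ are adjacent in $H_0$ and $s,t\le m$ with at least one of $s,t$ positive, then $(i,s)$ and $(j,t)$ are adjacent in $H_m$ with probability $1/2$, each such decision made independently of all others; (iv) $H_m$ is reflexive (and the edge relation is symmetric). Then there is $m\in\mathbb N$ such that (A) the probability that $H_m$ is $n$-saturated is positive; and (B) the probability of the following event $\mathcal X$ is positive: for every $p<n$, every $i_1,\dots,i_p,i\in V(H_0)$ such that $i_1,\dots,i_p$ are each adjacent to $i$ in $H_0$, and every $j_1,\dots,j_p\in\{0,1,\dots,m\}$, there is $l\in\{0,1,\dots,m\}$ such that $(i_1,j_1),\dots,(i_p,j_p)$ are all adjacent to $(i,l)$ in $H_m$.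
   Context: A graph is a pair $G=(V(G),E(G))$ where $V(G)$ is a non-empty set and $E(G)$ is a symmetric and reflexive relation on $V(G)$. For $A\subseteq V(G)$, a type over $A$ is a function $f\colon A\to\{0,1\}$; a vertex $v\in V(G)\setminus A$ realizes $f$ if for every $a\in A$, $(a,v)\in E(G)$ iff $f(a)=1$. $G$ is $n$-saturated if for every $A\subseteq V(G)$ with $|A|<n$ and every type $f\in\{0,1\}^A$ some vertex $x\in V(G)\setminus A$ realizes $f$. $G$ is weakly $n$-saturated if for every $A\subseteq V(G)$ with $|A|<n$ there is $x\in V(G)$ adjacent to every $a\in A$. *)

theory Defs
  imports "HOL-Probability.Product_PMF"
begin

definition is_graph :: "'a set \<Rightarrow> ('a \<times> 'a) set \<Rightarrow> bool" where
  "is_graph V E \<longleftrightarrow> V \<noteq> {} \<and> E \<subseteq> V \<times> V \<and> sym E \<and> (\<forall>v\<in>V. (v, v) \<in> E)"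

definition n_saturated :: "'a set \<Rightarrow> ('a \<times> 'a) set \<Rightarrow> nat \<Rightarrow> bool" where
  "n_saturated V E n \<longleftrightarrow>
     (\<forall>A f. A \<subseteq> V \<and> finite A \<and> card A < n \<longrightarrow>
        (\<exists>x\<in>V - A. \<forall>a\<in>A. ((a, x) \<in> E \<longleftrightarrow> f a)))"

definition weakly_n_saturated :: "'a set \<Rightarrow> ('a \<times> 'a) set \<Rightarrow> nat \<Rightarrow> bool" where
  "weakly_n_saturated V E n \<longleftrightarrow>
     (\<forall>A. A \<subseteq> V \<and> finite A \<and> card A < n \<longrightarrow> (\<exists>x\<in>V. \<forall>a\<in>A. (a, x) \<in> E))"

definition HV :: "nat \<Rightarrow> nat \<Rightarrow> (nat \<times> nat) set" where
  "HV k m = {1..k} \<times> {0..m}"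

text \<open>The unordered pairs of distinct vertices of H_m whose adjacency is decided by a coin flip.\<close>
definition free_pairs :: "nat \<Rightarrow> (nat \<times> nat) set \<Rightarrow> nat \<Rightarrow> (nat \<times> nat) set set" where
  "free_pairs k E0 m =
     {{u, v} | u v. u \<in> HV k m \<and> v \<in> HV k m \<and> u \<noteq> v \<and> (fst u, fst v) \<in> E0
                    \<and> (0 < snd u \<or> 0 < snd v)}"

definition H_edges :: "nat \<Rightarrow> (nat \<times> nat) set \<Rightarrow> nat \<Rightarrow> ((nat \<times> nat) set \<Rightarrow> bool)
                        \<Rightarrow> ((nat \<times> nat) \<times> (nat \<times> nat)) set" where
  "H_edges k E0 m c =
     {(u, v). u \<in> HV k m \<and> v \<in> HV k m \<and>
        (u = v \<or> (snd u = 0 \<and> snd v = 0 \<and> (fst u, fst v) \<in> E0)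
               \<or> ({u, v} \<in> free_pairs k E0 m \<and> c {u, v}))}"

definition H_random :: "nat \<Rightarrow> (nat \<times> nat) set \<Rightarrow> nat \<Rightarrow> ((nat \<times> nat) \<times> (nat \<times> nat)) set pmf" where
  "H_random k E0 m =
     map_pmf (H_edges k E0 m) (Pi_pmf (free_pairs k E0 m) False (\<lambda>_. bernoulli_pmf (1/2)))"

definition event_X :: "nat \<Rightarrow> nat \<Rightarrow> (nat \<times> nat) set \<Rightarrow> nat \<Rightarrow> ((nat \<times> nat) \<times> (nat \<times> nat)) set set" where
  "event_X n k E0 m =
     {E. \<forall>p<n. \<forall>(ii :: nat \<Rightarrow> nat) i (jj :: nat \<Rightarrow> nat).
          i \<in> {1..k} \<and> (\<forall>q<p. ii q \<in> {1..k} \<and> (ii q, i) \<in> E0 \<and> jj q \<in> {0..m}) \<longrightarrow>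
          (\<exists>l\<in>{0..m}. \<forall>q<p. ((ii q, jj q), (i, l)) \<in> E)}"

end

theory Submission
  imports Defs
begin

text \<open>Call an outcome of the coins good (copies_realize_types) if for every vertex i of H_0,
  every set A of fewer than n vertices of H_m and every T \<subseteq> A, some copy (i, l), l \<ge> 1,
  outside A is joined by the coins to exactly those H_0-neighbours of i in A that lie in T.
  A good outcome gives (A): by weak saturation of H_0 some i is adjacent in H_0 to the first
  coordinates of all vertices of T, and a suitable copy of i realizes the type. With T = A it
  also gives (B). For fixed (i, A, T) the coins deciding different copies are disjoint, so the
  at least m - n copies outside A fail independently, each with probability at most 1 - 2^-n.
  There are only polynomially many triples in m, so by the union bound a good outcome exists
  for large m, and it has positive probability in the finite space.\<close>

abbreviation fair_coins :: "'a set \<Rightarrow> ('a \<Rightarrow> bool) pmf" where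
  "fair_coins F \<equiv> Pi_pmf F False (\<lambda>_. bernoulli_pmf (1/2))"

lemma measure_pmf_prob_pair_Times:
  "measure_pmf.prob (pair_pmf M N) (X \<times> Y) = measure_pmf.prob M X * measure_pmf.prob N Y"
proof -
  have "measure_pmf.prob (pair_pmf M N) (X \<times> Y) =
        measure_pmf.prob (pair_pmf M N) ((X \<inter> set_pmf M) \<times> (Y \<inter> set_pmf N))"
    by (subst measure_Int_set_pmf[symmetric]) (simp add: Times_Int_Times)
  also have "\<dots> = measure_pmf.prob M (X \<inter> set_pmf M) * measure_pmf.prob N (Y \<inter> set_pmf N)"
    by (rule measure_pmf_prob_product) auto
  finally show ?thesis by (simp add: measure_Int_set_pmf)
qed

lemma prob_Pi_pmf_subset:
  assumes "finite F" "B \<subseteq> F"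
    and "\<And>c c'. (\<And>x. x \<in> B \<Longrightarrow> c x = c' x) \<Longrightarrow> P c = P c'"
  shows "measure_pmf.prob (Pi_pmf B d p) {c. P c} = measure_pmf.prob (Pi_pmf F d p) {c. P c}"
proof -
  have "P (\<lambda>x. if x \<in> B then f x else d) = P f" for f
    by (rule assms(3)) simp
  then have "(\<lambda>f x. if x \<in> B then f x else d) -` {c. P c} = {c. P c}"
    by auto
  then show ?thesis
    by (simp add: Pi_pmf_subset[OF assms(1,2)] measure_map_pmf)
qed

lemma prob_Pi_pmf_independent_split:
  fixes p :: "'a \<Rightarrow> 'b pmf"
  assumes "finite F" "A \<subseteq> F"
    and P: "\<And>c c'. (\<And>x. x \<in> A \<Longrightarrow> c x = c' x) \<Longrightarrow> P c = P c'"
    and Q: "\<And>c c'. (\<And>x. x \<in> F - A \<Longrightarrow> c x = c' x) \<Longrightarrow> Q c = Q c'"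
  shows "measure_pmf.prob (Pi_pmf F d p) {c. P c \<and> Q c} =
    measure_pmf.prob (Pi_pmf F d p) {c. P c} * measure_pmf.prob (Pi_pmf F d p) {c. Q c}"
proof -
  define h :: "('a \<Rightarrow> 'b) \<times> ('a \<Rightarrow> 'b) \<Rightarrow> 'a \<Rightarrow> 'b"
    where "h = (\<lambda>(f, g) x. if x \<in> A then f x else g x)"
  have "finite A" using assms(1,2) finite_subset by blast
  then have "Pi_pmf (A \<union> (F - A)) d p = map_pmf h (pair_pmf (Pi_pmf A d p) (Pi_pmf (F - A) d p))"
    unfolding h_def using assms(1) by (intro Pi_pmf_union) auto
  moreover have "A \<union> (F - A) = F" using assms(2) by blast
  moreover have "P (h (f, g)) = P f" "Q (h (f, g)) = Q g" for f g
    by (rule P, simp add: h_def, rule Q, simp add: h_def)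
  then have "h -` {c. P c \<and> Q c} = {f. P f} \<times> {g. Q g}"
    by auto
  ultimately have "measure_pmf.prob (Pi_pmf F d p) {c. P c \<and> Q c} =
      measure_pmf.prob (Pi_pmf A d p) {f. P f} * measure_pmf.prob (Pi_pmf (F - A) d p) {g. Q g}"
    by (simp add: measure_map_pmf measure_pmf_prob_pair_Times)
  also have "measure_pmf.prob (Pi_pmf A d p) {f. P f} = measure_pmf.prob (Pi_pmf F d p) {f. P f}"
    using assms(1,2) P by (rule prob_Pi_pmf_subset)
  also have "measure_pmf.prob (Pi_pmf (F - A) d p) {g. Q g} = measure_pmf.prob (Pi_pmf F d p) {g. Q g}"
    using assms(1) _ Q by (rule prob_Pi_pmf_subset) auto
  finally show ?thesis .
qed

lemma prob_Pi_pmf_disjoint_blocks: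
  assumes "finite L" "finite F" "\<And>l. l \<in> L \<Longrightarrow> S l \<subseteq> F" "disjoint_family_on S L"
    and dep: "\<And>l c c'. l \<in> L \<Longrightarrow> (\<And>x. x \<in> S l \<Longrightarrow> c x = c' x) \<Longrightarrow> P l c = P l c'"
  shows "measure_pmf.prob (Pi_pmf F d p) {c. \<forall>l\<in>L. P l c} =
           (\<Prod>l\<in>L. measure_pmf.prob (Pi_pmf F d p) {c. P l c})"
  using assms(1) subset_refl
proof (induction rule: finite_subset_induct')
  case empty
  then show ?case by simp
next
  case (insert l0 L')
  have sub: "S l \<subseteq> F - S l0" if "l \<in> L'" for l
  proof -
    have "l \<in> L" "l \<noteq> l0" using that insert.hyps by auto
    then have "S l \<inter> S l0 = {}"
      using assms(4) insert.hyps(2) unfolding disjoint_family_on_def by blast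
    then show ?thesis using assms(3)[OF \<open>l \<in> L\<close>] by blast
  qed
  have depL: "(\<forall>l\<in>L'. P l c) = (\<forall>l\<in>L'. P l c')" if "\<And>x. x \<in> F - S l0 \<Longrightarrow> c x = c' x" for c c'
  proof (rule ball_cong[OF refl])
    fix l assume "l \<in> L'"
    then show "P l c = P l c'"
      using insert.hyps(3) sub that by (intro dep) auto
  qed
  have "measure_pmf.prob (Pi_pmf F d p) {c. P l0 c \<and> (\<forall>l\<in>L'. P l c)} =
      measure_pmf.prob (Pi_pmf F d p) {c. P l0 c} * measure_pmf.prob (Pi_pmf F d p) {c. \<forall>l\<in>L'. P l c}"
    by (rule prob_Pi_pmf_independent_split[OF assms(2) assms(3)[OF insert.hyps(2)] dep[OF insert.hyps(2)] depL])
  then show ?case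
    using insert.hyps by (simp add: insert.IH)
qed

lemma prob_fair_coins_prescribed:
  assumes "finite F" "S \<subseteq> F"
  shows "measure_pmf.prob (fair_coins F) {c. \<forall>y\<in>S. c y = v y} = (1/2) ^ card S"
proof -
  have "{c. \<forall>y\<in>S. c y = v y} = Pi F (\<lambda>y. if y \<in> S then {v y} else UNIV)"
    using assms(2) by (force simp: Pi_iff)
  then have "measure_pmf.prob (fair_coins F) {c. \<forall>y\<in>S. c y = v y} =
      (\<Prod>y\<in>F. if y \<in> S then 1/2 else 1)"
    by (simp add: measure_Pi_pmf_Pi[OF assms(1)] measure_pmf_single if_distrib cong: if_cong)
  also have "\<dots> = (1/2) ^ card S"
    using assms by (simp add: prod.If_cases Int_absorb1)
  finally show ?thesis .
qed

lemma exists_in_set_pmf_avoiding: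
  assumes "finite I" "(\<Sum>j\<in>I. measure_pmf.prob P (B j)) < 1"
  shows "\<exists>x\<in>set_pmf P. \<forall>j\<in>I. x \<notin> B j"
proof (rule ccontr)
  assume "\<not> ?thesis"
  then have "set_pmf P \<subseteq> (\<Union>j\<in>I. B j)" by blast
  then have "measure_pmf.prob P (\<Union>j\<in>I. B j) = 1"
    by (simp add: measure_pmf.prob_eq_1 AE_measure_pmf_iff subset_eq)
  moreover have "measure_pmf.prob P (\<Union>j\<in>I. B j) \<le> (\<Sum>j\<in>I. measure_pmf.prob P (B j))"
    by (rule measure_pmf.finite_measure_subadditive_finite[OF assms(1)]) simp
  ultimately show False using assms(2) by simp
qed

lemma poly_times_geometric_tendsto_0:
  fixes q c :: real
  assumes "0 \<le> q" "q < 1" "0 \<le> c"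
  shows "(\<lambda>M. (real M + c) ^ d * q ^ M) \<longlonglongrightarrow> 0"
proof (cases "d = 0")
  case True
  then show ?thesis using assms by (simp add: LIMSEQ_power_zero)
next
  case False
  define r where "r = root d q"
  have r: "0 \<le> r" "r < 1" "r ^ d = q"
    using assms False by (simp_all add: r_def real_root_ge_zero real_root_lt_1_iff)
  have "(\<lambda>M. real M * r ^ M + c * r ^ M) \<longlonglongrightarrow> 0 + c * 0"
    using r by (intro tendsto_add tendsto_mult tendsto_const powser_times_n_limit_0 LIMSEQ_power_zero)
      auto
  then have "(\<lambda>M. ((real M + c) * r ^ M) ^ d) \<longlonglongrightarrow> 0 ^ d"
    by (intro tendsto_power) (simp add: algebra_simps)
  moreover have "((real M + c) * r ^ M) ^ d = (real M + c) ^ d * q ^ M" for M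
    by (simp add: power_mult_distrib r(3)[symmetric] power_mult[symmetric] mult.commute)
  ultimately show ?thesis using False by (simp add: power_0_left)
qed

lemma exists_poly_times_geometric_less_1:
  fixes q c C :: real
  assumes "0 \<le> q" "q < 1" "0 \<le> c"
  shows "\<exists>M. C * (real M + c) ^ d * q ^ M < 1"
proof -
  have "(\<lambda>M. C * ((real M + c) ^ d * q ^ M)) \<longlonglongrightarrow> C * 0"
    using assms by (intro tendsto_mult tendsto_const poly_times_geometric_tendsto_0)
  then have "\<forall>\<^sub>F M in sequentially. C * ((real M + c) ^ d * q ^ M) < 1"
    by (rule order_tendstoD(2)) simp
  then show ?thesis by (auto simp: eventually_sequentially mult.assoc)
qed

lemma card_subsets_card_less_le:
  assumes "finite V" "V \<noteq> {}"
  shows "card {A. A \<subseteq> V \<and> card A < n} \<le> n * card V ^ n"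
proof -
  have "{A. A \<subseteq> V \<and> card A < n} = (\<Union>j<n. {A. A \<subseteq> V \<and> card A = j})" by auto
  then have "card {A. A \<subseteq> V \<and> card A < n} \<le> (\<Sum>j<n. card {A. A \<subseteq> V \<and> card A = j})"
    by (simp add: card_UN_le)
  also have "\<dots> = (\<Sum>j<n. card V choose j)"
    using n_subsets[OF assms(1)] by simp
  also have "\<dots> \<le> (\<Sum>j<n. card V ^ n)"
  proof (rule sum_mono)
    fix j assume "j \<in> {..<n}"
    moreover have "card V \<ge> 1" using assms by (simp add: Suc_leI card_gt_0_iff)
    ultimately have "card V ^ j \<le> card V ^ n" by (intro power_increasing) auto
    then show "card V choose j \<le> card V ^ n"
      using binomial_le_pow[of j "card V"] by (cases "j \<le> card V") (auto simp: binomial_eq_0)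
  qed
  finally show ?thesis by simp
qed

lemma card_Sigma_subsets_card_less_Pow_le:
  assumes "finite V" "V \<noteq> {}"
  shows "card (SIGMA A:{A. A \<subseteq> V \<and> card A < n}. Pow A) \<le> n * card V ^ n * 2 ^ n"
proof -
  have fin: "finite A" if "A \<subseteq> V" for A
    using assms(1) that finite_subset by blast
  have "card (SIGMA A:{A. A \<subseteq> V \<and> card A < n}. Pow A) = (\<Sum>A | A \<subseteq> V \<and> card A < n. 2 ^ card A)"
    using assms(1) fin by (subst card_SigmaI) (auto simp: card_Pow)
  also have "\<dots> \<le> (\<Sum>A | A \<subseteq> V \<and> card A < n. 2 ^ n)"
    by (intro sum_mono power_increasing) auto
  also have "\<dots> \<le> n * card V ^ n * 2 ^ n"
    using card_subsets_card_less_le[OF assms] by simp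
  finally show ?thesis .
qed

text \<open>A vertex (i, l) with l \<ge> 1 is a copy of i: all its adjacencies are decided by the coins c.\<close>

lemma finite_free_pairs: "finite (free_pairs k E0 m)"
proof -
  have "free_pairs k E0 m \<subseteq> (\<lambda>(u, v). {u, v}) ` (HV k m \<times> HV k m)"
    by (auto simp: free_pairs_def)
  then show ?thesis by (rule finite_subset) (simp add: HV_def)
qed

lemma copy_pair_in_free_pairs_iff:
  assumes "sym E0" "a \<in> HV k m" "i \<in> {1..k}" "l \<in> {1..m}" "a \<noteq> (i, l)"
  shows "{a, (i, l)} \<in> free_pairs k E0 m \<longleftrightarrow> (fst a, i) \<in> E0"
proof
  assume "{a, (i, l)} \<in> free_pairs k E0 m"
  then obtain u v where "{a, (i, l)} = {u, v}" "(fst u, fst v) \<in> E0"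
    by (auto simp: free_pairs_def)
  then show "(fst a, i) \<in> E0"
    using assms(1) by (auto simp: doubleton_eq_iff dest: symD)
next
  assume "(fst a, i) \<in> E0"
  moreover have "(i, l) \<in> HV k m" using assms(3,4) by (simp add: HV_def)
  ultimately show "{a, (i, l)} \<in> free_pairs k E0 m"
    using assms(2,4,5) unfolding free_pairs_def by (intro CollectI exI[of _ a] exI[of _ "(i, l)"]) auto
qed

lemma H_edges_copy_iff:
  assumes "sym E0" "a \<in> HV k m" "i \<in> {1..k}" "l \<in> {1..m}" "a \<noteq> (i, l)"
  shows "(a, (i, l)) \<in> H_edges k E0 m c \<longleftrightarrow> (fst a, i) \<in> E0 \<and> c {a, (i, l)}"
  using assms copy_pair_in_free_pairs_iff[OF assms] by (auto simp: H_edges_def HV_def)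

definition coins_between ::
    "(nat \<times> nat) set \<Rightarrow> (nat \<times> nat) set \<Rightarrow> nat \<times> nat \<Rightarrow> (nat \<times> nat) set set"
  where "coins_between E0 A x = (\<lambda>a. {a, x}) ` {a\<in>A. (fst a, fst x) \<in> E0}"

definition coins_realize ::
    "(nat \<times> nat) set \<Rightarrow> (nat \<times> nat) set \<Rightarrow> (nat \<times> nat) set \<Rightarrow> nat \<times> nat \<Rightarrow>
      ((nat \<times> nat) set \<Rightarrow> bool) \<Rightarrow> bool"
  where "coins_realize E0 A T x c \<longleftrightarrow> (\<forall>a\<in>A. (fst a, fst x) \<in> E0 \<longrightarrow> c {a, x} = (a \<in> T))"

definition copies_realize_types ::
    "nat \<Rightarrow> nat \<Rightarrow> (nat \<times> nat) set \<Rightarrow> nat \<Rightarrow> ((nat \<times> nat) set \<Rightarrow> bool) \<Rightarrow> bool"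
  where "copies_realize_types n k E0 m c \<longleftrightarrow>
    (\<forall>i\<in>{1..k}. \<forall>A T. A \<subseteq> HV k m \<and> card A < n \<and> T \<subseteq> A \<longrightarrow>
       (\<exists>l\<in>{1..m}. (i, l) \<notin> A \<and> coins_realize E0 A T (i, l) c))"

lemma copies_realize_types_imp_n_saturated:
  assumes c: "copies_realize_types n k E0 m c"
    and "is_graph {1..k} E0" "weakly_n_saturated {1..k} E0 n"
  shows "n_saturated (HV k m) (H_edges k E0 m c) n"
  unfolding n_saturated_def
proof (intro allI impI)
  fix A f assume A: "A \<subseteq> HV k m \<and> finite A \<and> card A < n"
  have sym: "sym E0" using assms(2) by (simp add: is_graph_def)
  define T where "T = {a\<in>A. f a}"
  have T: "T \<subseteq> A" "finite T" using A by (auto simp: T_def)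
  have "card (fst ` T) < n"
    using A T card_image_le[of T fst] card_mono[of A T] by linarith
  moreover have "fst ` T \<subseteq> {1..k}" using A T by (auto simp: HV_def)
  ultimately obtain i where i: "i \<in> {1..k}" "\<forall>b\<in>fst ` T. (b, i) \<in> E0"
    using assms(3) T(2) unfolding weakly_n_saturated_def by blast
  obtain l where l: "l \<in> {1..m}" "(i, l) \<notin> A" "coins_realize E0 A T (i, l) c"
    using c i(1) A T(1) unfolding copies_realize_types_def by blast
  have "(a, (i, l)) \<in> H_edges k E0 m c \<longleftrightarrow> f a" if a: "a \<in> A" for a
  proof -
    have "(a, (i, l)) \<in> H_edges k E0 m c \<longleftrightarrow> (fst a, i) \<in> E0 \<and> c {a, (i, l)}"
      by (rule H_edges_copy_iff[OF sym]) (use A a i l in auto)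
    moreover have "(fst a, i) \<in> E0" if "f a"
    proof -
      have "a \<in> T" using a that by (simp add: T_def)
      then show ?thesis using i(2) by blast
    qed
    ultimately show ?thesis
      using l(3) a unfolding coins_realize_def T_def by auto
  qed
  moreover have "(i, l) \<in> HV k m - A" using i l by (auto simp: HV_def)
  ultimately show "\<exists>x\<in>HV k m - A. \<forall>a\<in>A. ((a, x) \<in> H_edges k E0 m c) = f a" by blast
qed

lemma copies_realize_types_imp_event_X:
  assumes c: "copies_realize_types n k E0 m c" and sym: "sym E0"
  shows "H_edges k E0 m c \<in> event_X n k E0 m"
  unfolding event_X_def
proof (intro CollectI allI impI)
  fix p ii i jj
  assume p: "p < n"
    and h: "i \<in> {1..k} \<and> (\<forall>q<p. ii q \<in> {1..k} \<and> (ii q, i) \<in> E0 \<and> jj q \<in> {0..m})"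
  define A where "A = (\<lambda>q. (ii q, jj q)) ` {..<p}"
  have A: "A \<subseteq> HV k m" "card A < n"
    using h p card_image_le[of "{..<p}" "\<lambda>q. (ii q, jj q)"] by (auto simp: A_def HV_def)
  then obtain l where l: "l \<in> {1..m}" "(i, l) \<notin> A" "coins_realize E0 A A (i, l) c"
    using c h unfolding copies_realize_types_def by blast
  have "((ii q, jj q), (i, l)) \<in> H_edges k E0 m c" if "q < p" for q
  proof -
    have a: "(ii q, jj q) \<in> A" using that by (simp add: A_def)
    then have "c {(ii q, jj q), (i, l)}"
      using l(3) h that unfolding coins_realize_def by auto
    moreover have "(ii q, jj q) \<noteq> (i, l)" using a l(2) by auto
    ultimately show ?thesis
      using H_edges_copy_iff[OF sym, of "(ii q, jj q)" k m i l c] A(1) a h l(1) that by auto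
  qed
  then show "\<exists>l\<in>{0..m}. \<forall>q<p. ((ii q, jj q), i, l) \<in> H_edges k E0 m c"
    using l(1) by (intro bexI[of _ l]) auto
qed

lemma coins_between_subset_free_pairs:
  assumes "sym E0" "i \<in> {1..k}" "l \<in> {1..m}" "A \<subseteq> HV k m" "(i, l) \<notin> A"
  shows "coins_between E0 A (i, l) \<subseteq> free_pairs k E0 m"
  using assms copy_pair_in_free_pairs_iff[OF assms(1) _ assms(2,3)]
  by (fastforce simp: coins_between_def)

lemma coins_realize_cong:
  assumes "\<And>y. y \<in> coins_between E0 A x \<Longrightarrow> c y = c' y"
  shows "coins_realize E0 A T x c = coins_realize E0 A T x c'"
  using assms by (auto simp: coins_realize_def coins_between_def)

lemma disjoint_coins_between_copies:
  assumes "\<And>l. l \<in> L \<Longrightarrow> (i, l) \<notin> A"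
  shows "disjoint_family_on (\<lambda>l. coins_between E0 A (i, l)) L"
  using assms by (fastforce simp: disjoint_family_on_def coins_between_def doubleton_eq_iff)

lemma prob_coins_realize_ge:
  assumes "sym E0" "i \<in> {1..k}" "l \<in> {1..m}" "A \<subseteq> HV k m" "(i, l) \<notin> A" "T \<subseteq> A"
  shows "(1/2) ^ card A \<le>
    measure_pmf.prob (fair_coins (free_pairs k E0 m)) {c. coins_realize E0 A T (i, l) c}"
proof -
  define S where "S = coins_between E0 A (i, l)"
  have finA: "finite A" using assms(4) finite_subset by (auto simp: HV_def)
  have "(\<exists>a'\<in>T. {a, (i, l)} = {a', (i, l)}) \<longleftrightarrow> a \<in> T" if "a \<in> A" for a
    using assms(5,6) that by (auto simp: doubleton_eq_iff)
  then have "{c. coins_realize E0 A T (i, l) c} = {c. \<forall>y\<in>S. c y = (\<exists>a\<in>T. y = {a, (i, l)})}"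
    unfolding coins_realize_def coins_between_def S_def by auto
  then have "measure_pmf.prob (fair_coins (free_pairs k E0 m)) {c. coins_realize E0 A T (i, l) c} =
      (1/2) ^ card S"
    using coins_between_subset_free_pairs[OF assms(1-5)] finite_free_pairs
    by (simp add: S_def prob_fair_coins_prescribed)
  moreover have "card S \<le> card {a\<in>A. (fst a, i) \<in> E0}"
    unfolding S_def coins_between_def fst_conv by (rule card_image_le) (use finA in simp)
  moreover have "\<dots> \<le> card A"
    by (rule card_mono[OF finA]) auto
  ultimately show ?thesis by (simp add: power_decreasing)
qed

lemma card_copies_outside_ge:
  assumes "finite A"
  shows "m - card A \<le> card {l\<in>{1..m}. (i, l) \<notin> A}"
proof -
  have "m - card A \<le> card {1..m} - card (snd ` A)"
    using card_image_le[OF assms, of snd] by simp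
  also have "\<dots> \<le> card ({1..m} - snd ` A)"
    using assms by (intro diff_card_le_card_Diff) simp
  also have "\<dots> \<le> card {l\<in>{1..m}. (i, l) \<notin> A}"
    by (rule card_mono) (auto intro: rev_image_eqI)
  finally show ?thesis .
qed

lemma prob_no_copy_realizes_le:
  assumes "sym E0" "i \<in> {1..k}" "A \<subseteq> HV k m" "card A < n" "T \<subseteq> A"
  shows "measure_pmf.prob (fair_coins (free_pairs k E0 m))
      {c. \<forall>l\<in>{1..m}. (i, l) \<notin> A \<longrightarrow> \<not> coins_realize E0 A T (i, l) c} \<le> (1 - (1/2) ^ n) ^ (m - n)"
proof -
  define L where "L = {l\<in>{1..m}. (i, l) \<notin> A}"
  define P where "P = fair_coins (free_pairs k E0 m)"
  have finA: "finite A" using assms(3) finite_subset by (auto simp: HV_def)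
  have "measure_pmf.prob P {c. \<forall>l\<in>{1..m}. (i, l) \<notin> A \<longrightarrow> \<not> coins_realize E0 A T (i, l) c} =
      measure_pmf.prob P {c. \<forall>l\<in>L. \<not> coins_realize E0 A T (i, l) c}"
    by (rule arg_cong[where f = "measure_pmf.prob P"]) (auto simp: L_def)
  also have "\<dots> = (\<Prod>l\<in>L. measure_pmf.prob P {c. \<not> coins_realize E0 A T (i, l) c})"
    unfolding P_def
  proof (rule prob_Pi_pmf_disjoint_blocks[OF _ finite_free_pairs])
    show "coins_between E0 A (i, l) \<subseteq> free_pairs k E0 m" if "l \<in> L" for l
      using that assms by (intro coins_between_subset_free_pairs) (auto simp: L_def)
    show "disjoint_family_on (\<lambda>l. coins_between E0 A (i, l)) L"
      by (rule disjoint_coins_between_copies) (simp add: L_def)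
    show "(\<not> coins_realize E0 A T (i, l) c) = (\<not> coins_realize E0 A T (i, l) c')"
      if "\<And>y. y \<in> coins_between E0 A (i, l) \<Longrightarrow> c y = c' y" for l c c'
      using coins_realize_cong[OF that] by simp
  qed (simp add: L_def)
  also have "\<dots> \<le> (\<Prod>l\<in>L. 1 - (1/2) ^ n)"
  proof (rule prod_mono)
    fix l assume l: "l \<in> L"
    have "(1/2) ^ n \<le> ((1/2) ^ card A :: real)"
      using assms(4) by (intro power_decreasing) auto
    also have "\<dots> \<le> measure_pmf.prob P {c. coins_realize E0 A T (i, l) c}"
      unfolding P_def using l assms by (intro prob_coins_realize_ge) (auto simp: L_def)
    finally show "0 \<le> measure_pmf.prob P {c. \<not> coins_realize E0 A T (i, l) c} \<and>
        measure_pmf.prob P {c. \<not> coins_realize E0 A T (i, l) c} \<le> 1 - (1/2) ^ n"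
      using measure_pmf.prob_compl[of "{c. coins_realize E0 A T (i, l) c}" P]
      by (simp add: Compl_eq_Diff_UNIV[symmetric] Collect_neg_eq[symmetric])
  qed
  also have "\<dots> = (1 - (1/2) ^ n) ^ card L" by simp
  also have "\<dots> \<le> (1 - (1/2) ^ n) ^ (m - n)"
    using card_copies_outside_ge[OF finA, of m i] assms(4)
    by (intro power_decreasing) (auto simp: L_def power_le_one)
  finally show ?thesis unfolding P_def .
qed

lemma card_type_triples_le:
  assumes "k \<ge> 1"
  shows "card ({1..k} \<times> (SIGMA A:{A. A \<subseteq> HV k m \<and> card A < n}. Pow A))
    \<le> k * (n * 2 ^ n * k ^ n) * (m + 1) ^ n"
proof -
  have HV: "finite (HV k m)" "HV k m \<noteq> {}" "card (HV k m) = k * (m + 1)"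
    using assms by (auto simp: HV_def)
  have "card ({1..k} \<times> (SIGMA A:{A. A \<subseteq> HV k m \<and> card A < n}. Pow A)) =
      k * card (SIGMA A:{A. A \<subseteq> HV k m \<and> card A < n}. Pow A)"
    by (simp add: card_cartesian_product)
  also have "\<dots> \<le> k * (n * card (HV k m) ^ n * 2 ^ n)"
    using card_Sigma_subsets_card_less_Pow_le[OF HV(1,2)] by (rule mult_le_mono2)
  also have "\<dots> = k * (n * 2 ^ n * k ^ n) * (m + 1) ^ n"
    unfolding HV(3) power_mult_distrib by (simp add: mult_ac)
  finally show ?thesis .
qed

lemma exists_copies_realize_types:
  assumes "k \<ge> 1" "sym E0"
  shows "\<exists>m. \<exists>c\<in>set_pmf (fair_coins (free_pairs k E0 m)). copies_realize_types n k E0 m c"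
proof -
  define q :: real where "q = 1 - (1/2) ^ n"
  have q: "0 \<le> q" "q < 1" by (auto simp: q_def power_le_one)
  define K where "K = k * (n * 2 ^ n * k ^ n)"
  obtain M where M: "real K * (real M + real (n + 1)) ^ n * q ^ M < 1"
    using exists_poly_times_geometric_less_1[OF q, of "real (n + 1)" "real K" n] by auto
  define m where "m = M + n"
  define I where "I = {1..k} \<times> (SIGMA A:{A. A \<subseteq> HV k m \<and> card A < n}. Pow A)"
  define Bad where "Bad = (\<lambda>(i, A, T).
    {c. \<forall>l\<in>{1..m}. (i, l) \<notin> A \<longrightarrow> \<not> coins_realize E0 A T (i, l) c})"
  have finI: "finite I"
    unfolding I_def by (auto simp: HV_def intro!: finite_SigmaI intro: finite_subset)
  have "card I \<le> K * (M + (n + 1)) ^ n"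
    using card_type_triples_le[OF assms(1), of m n] by (simp add: I_def K_def m_def add_ac)
  then have "real (card I) \<le> real (K * (M + (n + 1)) ^ n)"
    by (rule of_nat_mono)
  then have cardI: "real (card I) \<le> real K * (real M + real (n + 1)) ^ n"
    by (simp add: add_ac)
  have "(\<Sum>j\<in>I. measure_pmf.prob (fair_coins (free_pairs k E0 m)) (Bad j)) \<le> (\<Sum>j\<in>I. q ^ M)"
  proof (rule sum_mono)
    fix j assume "j \<in> I"
    then obtain i A T where j: "j = (i, A, T)"
      and iAT: "i \<in> {1..k}" "A \<subseteq> HV k m" "card A < n" "T \<subseteq> A"
      by (auto simp: I_def)
    have "m - n = M" by (simp add: m_def)
    then show "measure_pmf.prob (fair_coins (free_pairs k E0 m)) (Bad j) \<le> q ^ M"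
      using prob_no_copy_realizes_le[OF assms(2) iAT] by (simp add: Bad_def q_def j)
  qed
  also have "\<dots> \<le> real K * (real M + real (n + 1)) ^ n * q ^ M"
    using cardI q(1) by (simp add: mult_right_mono)
  also have "\<dots> < 1" by (fact M)
  finally obtain c where c: "c \<in> set_pmf (fair_coins (free_pairs k E0 m))" "\<forall>j\<in>I. c \<notin> Bad j"
    using exists_in_set_pmf_avoiding[OF finI] by blast
  have "copies_realize_types n k E0 m c"
    unfolding copies_realize_types_def
  proof (intro ballI allI impI)
    fix i A T assume "i \<in> {1..k}" "A \<subseteq> HV k m \<and> card A < n \<and> T \<subseteq> A"
    then have "c \<notin> Bad (i, A, T)" using c(2) by (auto simp: I_def)
    then show "\<exists>l\<in>{1..m}. (i, l) \<notin> A \<and> coins_realize E0 A T (i, l) c"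
      by (auto simp: Bad_def)
  qed
  then show ?thesis using c(1) by blast
qed

theorem lemma1:
  fixes n k :: nat and E0 :: "(nat \<times> nat) set"
  assumes "is_graph {1..k} E0"
    and "weakly_n_saturated {1..k} E0 n"
    and "n \<le> k"
  shows "\<exists>m::nat.
           measure_pmf.prob (H_random k E0 m) {E. n_saturated (HV k m) E n} > 0 \<and>
           measure_pmf.prob (H_random k E0 m) (event_X n k E0 m) > 0"
proof -
  have "k \<ge> 1" using assms(1) by (auto simp: is_graph_def)
  moreover have sym: "sym E0" using assms(1) by (simp add: is_graph_def)
  ultimately obtain m c where c: "c \<in> set_pmf (fair_coins (free_pairs k E0 m))"
    "copies_realize_types n k E0 m c"
    using exists_copies_realize_types by blast
  have H: "H_edges k E0 m c \<in> set_pmf (H_random k E0 m)"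
    unfolding H_random_def using c(1) by simp
  have "measure_pmf.prob (H_random k E0 m) {E. n_saturated (HV k m) E n} > 0"
    using copies_realize_types_imp_n_saturated[OF c(2) assms(1,2)] by (intro measure_pmf_posI[OF H]) simp
  moreover have "measure_pmf.prob (H_random k E0 m) (event_X n k E0 m) > 0"
    using copies_realize_types_imp_event_X[OF c(2) sym] by (rule measure_pmf_posI[OF H])
  ultimately show ?thesis by blast
qed

end
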